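(* Let $l:\mathbb{Z}^2\to\mathcal{L}^4_0$ be a principal contact element net with one family of spherical parameter lines $\{l_{i,j}\}_{i\in\mathbb{Z}}$. Generically, $\mathcal{L}_A^3l$ is Goursat degenerate and $\mathcal{L}_B^2l$ is Laplace degenerate.
   Context: Let $e_1,\dots,e_6$ be an orthonormal basis of $\mathbb{R}^{4,2}$ with $\langle e_i,e_i\rangle=1$ for $i\le4$ and $\langle e_5,e_5\rangle=\langle e_6,e_6\rangle=-1$. The Lie quadric is $\mathcal{L}^4=\{[x]\in\mathbb{R}\mathrm{P}^5:\langle x,x\rangle=0\}$ and $\mathcal{L}^4_0$ the set of lines contained in $\mathcal{L}^4$. A discrete line congruence is a map $l$ from $\mathbb{Z}^2$ to lines in a projective space such that neighbouring lines intersect; a principal contact element net is a discrete line congruence with values in $\mathcal{L}^4_0$. $\vee$ denotes projective span. The net has one family of spherical parameter lines $\{l_{i,j}\}_{i}$ if for every $j$ the span $\bigvee_i l_{i,j}$ is $4$-dimensional and the planes $\{l_{i,j}\vee l_{i,j+1}\}_{i\in\mathbb{Z}}$ are concurrent. Laplace transforms of line congruences: $\mathcal{L}_Al(i,j)=(l_{i,j}\vee l_{i+1,j})\cap(l_{i,j+1}\vee l_{i+1,j+1})$, $\mathcal{L}_Bl(i,j)=(l_{i,j}\vee l_{i,j+1})\cap(l_{i+1,j}\vee l_{i+1,j+1})$ (again line congruences), with iterates. $\mathcal{L}_A^kl$ is Goursat degenerate if $\mathcal{L}_A^kl(i,j)$ is independent of $i$; $\mathcal{L}_B^kl$ is Laplace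 degenerate if $\mathcal{L}_B^kl(i,j)$ is independent of $i$. "Generically" means for data in general position subject to the stated constraints. *)

theory Defs
  imports "HOL-Analysis.Analysis"
begin

text \<open>Model: projective space RP^5 = lines through 0 in real^6.  A projective
subspace of projective dimension d is a linear subspace of dimension d+1.
Projective points are 1-dim subspaces, projective lines 2-dim subspaces, planes
3-dim subspaces.\<close>

type_synonym vec6 = "real^6"

text \<open>The inner product of R^{4,2} in the orthonormal basis e1..e6.\<close>
definition lie_form :: "vec6 \<Rightarrow> vec6 \<Rightarrow> real" where
  "lie_form x y = x$1*y$1 + x$2*y$2 + x$3*y$3 + x$4*y$4 - x$5*y$5 - x$6*y$6"

definition proj_line :: "vec6 set \<Rightarrow> bool" where
  "proj_line L \<longleftrightarrow> subspace L \<and> dim L = 2"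

definition lie_line :: "vec6 set \<Rightarrow> bool" where
  "lie_line L \<longleftrightarrow> proj_line L \<and> (\<forall>x\<in>L. lie_form x x = 0)"

definition meets :: "vec6 set \<Rightarrow> vec6 set \<Rightarrow> bool" where
  "meets A B \<longleftrightarrow> (\<exists>x. x \<noteq> 0 \<and> x \<in> A \<and> x \<in> B)"

definition pjoin :: "vec6 set \<Rightarrow> vec6 set \<Rightarrow> vec6 set" where
  "pjoin A B = span (A \<union> B)"

definition line_congruence :: "(int \<Rightarrow> int \<Rightarrow> vec6 set) \<Rightarrow> bool" where
  "line_congruence l \<longleftrightarrow>
     (\<forall>i j. proj_line (l i j) \<and> meets (l i j) (l (i+1) j) \<and> meets (l i j) (l i (j+1)))"

definition principal_contact_element_net :: "(int \<Rightarrow> int \<Rightarrow> vec6 set) \<Rightarrow> bool" where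
  "principal_contact_element_net l \<longleftrightarrow> line_congruence l \<and> (\<forall>i j. lie_line (l i j))"

definition row_span :: "(int \<Rightarrow> int \<Rightarrow> vec6 set) \<Rightarrow> int \<Rightarrow> vec6 set" where
  "row_span l j = span (\<Union>i. l i j)"

text \<open>One family of spherical parameter lines {l i j}_i: for every j the span is
4-dimensional (projectively, i.e. linear dimension 5) and the planes
l i j \<or> l i (j+1), i \<in> Z, are concurrent (have a common point).\<close>
definition spherical_i_family :: "(int \<Rightarrow> int \<Rightarrow> vec6 set) \<Rightarrow> bool" where
  "spherical_i_family l \<longleftrightarrow>
     (\<forall>j. dim (row_span l j) = 5 \<and>
          (\<forall>i. dim (pjoin (l i j) (l i (j+1))) = 3) \<and>
          (\<exists>p. p \<noteq> 0 \<and> (\<forall>i. p \<in> pjoin (l i j) (l i (j+1)))))"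

definition laplace_A :: "(int \<Rightarrow> int \<Rightarrow> vec6 set) \<Rightarrow> int \<Rightarrow> int \<Rightarrow> vec6 set" where
  "laplace_A l i j = pjoin (l i j) (l (i+1) j) \<inter> pjoin (l i (j+1)) (l (i+1) (j+1))"

definition laplace_B :: "(int \<Rightarrow> int \<Rightarrow> vec6 set) \<Rightarrow> int \<Rightarrow> int \<Rightarrow> vec6 set" where
  "laplace_B l i j = pjoin (l i j) (l i (j+1)) \<inter> pjoin (l (i+1) j) (l (i+1) (j+1))"

definition goursat_degenerate_A :: "nat \<Rightarrow> (int \<Rightarrow> int \<Rightarrow> vec6 set) \<Rightarrow> bool" where
  "goursat_degenerate_A k l \<longleftrightarrow> (\<forall>i i' j. (laplace_A ^^ k) l i j = (laplace_A ^^ k) l i' j)"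

definition laplace_degenerate_B :: "nat \<Rightarrow> (int \<Rightarrow> int \<Rightarrow> vec6 set) \<Rightarrow> bool" where
  "laplace_degenerate_B k l \<longleftrightarrow> (\<forall>i i' j. (laplace_B ^^ k) l i j = (laplace_B ^^ k) l i' j)"

text \<open>Genericity (general position) assumptions:
 (1) the iterated Laplace transforms that occur are well defined, i.e. are lines;
 (2) the hyperplanes spanned by four consecutive spherical parameter lines are in
     general position (their intersection is a line);
 (3) the concurrency points of two consecutive families of planes are distinct
     (the common intersections of the two families of planes share no point).\<close>
definition generic_net :: "(int \<Rightarrow> int \<Rightarrow> vec6 set) \<Rightarrow> bool" where
  "generic_net l \<longleftrightarrow>
     (\<forall>k\<in>{1..3}. \<forall>i j. proj_line ((laplace_A ^^ k) l i j)) \<and>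
     (\<forall>k\<in>{1..2}. \<forall>i j. proj_line ((laplace_B ^^ k) l i j)) \<and>
     (\<forall>j. dim (row_span l j \<inter> row_span l (j+1) \<inter> row_span l (j+2) \<inter> row_span l (j+3)) = 2) \<and>
     (\<forall>j. (\<Inter>i. pjoin (l i j) (l i (j+1))) \<inter> (\<Inter>i. pjoin (l i (j+1)) (l i (j+2))) = {0})"

end

theory Submission
  imports Defs
begin

text \<open>A Laplace transform in direction A of a congruence whose lines lie in the
  subspaces \<open>S j\<close> lies in \<open>S j \<inter> S (j+1)\<close>; so the third A-transform of the net lies in the
  intersection of four consecutive row spans, which is generically a line, and hence equals it.
  In direction B, the concurrency point \<open>P j\<close> of the planes \<open>l i j \<or> l i (j+1)\<close> lies on every
  line \<open>\<L>\<^sub>B l i j\<close>; hence \<open>P j\<close> and \<open>P (j+1)\<close> both lie on every \<open>\<L>\<^sub>B\<^sup>2 l i j\<close>, which is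
  therefore the line joining them.\<close>

lemma pjoin_subset_subspace:
  assumes "A \<subseteq> S" "B \<subseteq> S" "subspace S"
  shows "pjoin A B \<subseteq> S"
  unfolding pjoin_def using assms by (intro span_minimal) auto

lemma pjoin_upper1: "A \<subseteq> pjoin A B"
  and pjoin_upper2: "B \<subseteq> pjoin A B"
  unfolding pjoin_def by (auto intro: span_base)

lemma proj_line_subset_eq:
  assumes "proj_line L" "proj_line M" "L \<subseteq> M"
  shows "L = M"
  using assms unfolding proj_line_def by (intro subspace_dim_equal) auto

lemma proj_line_span_pair:
  assumes "p \<noteq> 0" "q \<notin> span {p}"
  shows "proj_line (span {p, q})"
proof -
  have indep: "independent {q, p}"
    using independent_insertI[OF assms(2)] assms(1) by simp
  have "q \<noteq> p"
    using assms(2) by (auto intro: span_base)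
  then show ?thesis
    using dim_span_eq_card_independent[OF indep] unfolding proj_line_def
    by (simp add: insert_commute)
qed

lemma funpow_laplace_A_subset_Inter:
  assumes "\<And>i j. l i j \<subseteq> S j" and "\<And>j. subspace (S j)"
  shows "(laplace_A ^^ k) l i j \<subseteq> (\<Inter>m\<le>k. S (j + int m))"
proof (induction k arbitrary: i j)
  case 0
  show ?case using assms(1) by simp
next
  case (Suc k)
  define T where "T j = (\<Inter>m\<le>k. S (j + int m))" for j
  have "subspace (T j)" for j
    unfolding T_def using assms(2) by (auto intro: subspace_Inter)
  moreover have "(laplace_A ^^ k) l i j \<subseteq> T j" for i j
    using Suc.IH by (simp add: T_def)
  ultimately have "laplace_A ((laplace_A ^^ k) l) i j \<subseteq> T j \<inter> T (j + 1)"
    unfolding laplace_A_def by (intro Int_mono pjoin_subset_subspace) auto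
  also have "\<dots> \<subseteq> (\<Inter>m\<le>Suc k. S (j + int m))"
  proof (intro INT_greatest)
    fix m assume m: "m \<in> {..Suc k}"
    show "T j \<inter> T (j + 1) \<subseteq> S (j + int m)"
    proof (cases m)
      case 0
      then show ?thesis
        using INT_lower[of 0 "{..k}" "\<lambda>m. S (j + int m)"] by (auto simp: T_def)
    next
      case (Suc n)
      with m have "n \<in> {..k}" by simp
      then show ?thesis
        using INT_lower[of n "{..k}" "\<lambda>m. S (j + 1 + int m)"] Suc by (auto simp: T_def ac_simps)
    qed
  qed
  finally show ?case by simp
qed

lemma goursat_degenerate_A_if_row_spans_meet_in_line:
  assumes lines: "\<And>i j. proj_line ((laplace_A ^^ k) l i j)"
    and meet: "\<And>j. proj_line (\<Inter>m\<le>k. row_span l (j + int m))"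
  shows "goursat_degenerate_A k l"
proof -
  have "l i j \<subseteq> row_span l j" for i j
    unfolding row_span_def by (auto intro: span_base)
  then have "(laplace_A ^^ k) l i j = (\<Inter>m\<le>k. row_span l (j + int m))" for i j
    using lines meet funpow_laplace_A_subset_Inter[of l "row_span l"]
    by (intro proj_line_subset_eq) (auto simp: row_span_def)
  then show ?thesis
    unfolding goursat_degenerate_A_def by simp
qed

lemma laplace_B_if_concurrent:
  assumes "\<And>i. p \<in> pjoin (l i j) (l i (j + 1))"
  shows "p \<in> laplace_B l i j"
  using assms unfolding laplace_B_def by blast

lemma laplace_degenerate_B_2_if_concurrent:
  assumes lines: "\<And>i j. proj_line ((laplace_B ^^ 2) l i j)"
    and concurrent: "\<And>i j. P j \<in> pjoin (l i j) (l i (j + 1))"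
    and nonzero: "\<And>j. P j \<noteq> 0"
    and distinct: "\<And>j. P (j + 1) \<notin> span {P j}"
  shows "laplace_degenerate_B 2 l"
proof -
  have B2: "(laplace_B ^^ 2) l = laplace_B (laplace_B l)"
    by (simp add: numeral_2_eq_2)
  have on_B: "P j \<in> laplace_B l i j" for i j
    using concurrent by (rule laplace_B_if_concurrent)
  have "P j \<in> (laplace_B ^^ 2) l i j" "P (j + 1) \<in> (laplace_B ^^ 2) l i j" for i j
    unfolding B2 using on_B pjoin_upper1 pjoin_upper2
    by (blast intro: laplace_B_if_concurrent)+
  then have "span {P j, P (j + 1)} = (laplace_B ^^ 2) l i j" for i j
    using lines nonzero distinct
    by (intro proj_line_subset_eq proj_line_span_pair span_minimal) (auto simp: proj_line_def)
  then show ?thesis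
    unfolding laplace_degenerate_B_def by metis
qed

lemma concurrency_points_distinct:
  assumes "spherical_i_family l"
    and "\<And>j. (\<Inter>i. pjoin (l i j) (l i (j + 1))) \<inter> (\<Inter>i. pjoin (l i (j + 1)) (l i (j + 2))) = {0}"
  obtains P where "\<And>j. P j \<noteq> 0" "\<And>i j. P j \<in> pjoin (l i j) (l i (j + 1))"
    "\<And>j. P (j + 1) \<notin> span {P j}"
proof -
  define Q where "Q j = (\<Inter>i. pjoin (l i j) (l i (j + 1)))" for j
  have subspace_Q: "subspace (Q j)" for j
    unfolding Q_def pjoin_def by (auto intro: subspace_Inter)
  have "\<forall>j. \<exists>p. p \<noteq> 0 \<and> p \<in> Q j"
    using assms(1) unfolding spherical_i_family_def Q_def by blast
  then obtain P where P: "\<And>j. P j \<noteq> 0" "\<And>j. P j \<in> Q j"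
    by metis
  have "P (j + 1) \<notin> span {P j}" for j
  proof
    assume "P (j + 1) \<in> span {P j}"
    then have "P (j + 1) \<in> Q j"
      using span_minimal[of "{P j}" "Q j"] P(2) subspace_Q by blast
    moreover have "Q j \<inter> Q (j + 1) = {0}"
      using assms(2) unfolding Q_def by (simp add: add.assoc)
    ultimately show False
      using P(1)[of "j + 1"] P(2)[of "j + 1"] by blast
  qed
  moreover have "P j \<in> pjoin (l i j) (l i (j + 1))" for i j
    using P(2) unfolding Q_def by blast
  ultimately show thesis
    using P(1) that by blast
qed

theorem proposition5p6:
  fixes l :: "int \<Rightarrow> int \<Rightarrow> (real^6) set"
  assumes "principal_contact_element_net l"
    and "spherical_i_family l"
    and "generic_net l"
  shows "goursat_degenerate_A 3 l \<and> laplace_degenerate_B 2 l"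
proof
  have "(\<Inter>m\<le>3. row_span l (j + int m)) =
      row_span l j \<inter> row_span l (j + 1) \<inter> row_span l (j + 2) \<inter> row_span l (j + 3)" for j
    by (auto simp: numeral_3_eq_3 atMost_Suc ac_simps)
  moreover have "subspace (row_span l j)" for j
    by (simp add: row_span_def)
  ultimately have "proj_line (\<Inter>m\<le>3. row_span l (j + int m))" for j
    using assms(3) unfolding generic_net_def proj_line_def by (simp add: subspace_inter)
  moreover have "proj_line ((laplace_A ^^ 3) l i j)" for i j
    using assms(3) unfolding generic_net_def by simp
  ultimately show "goursat_degenerate_A 3 l"
    by (intro goursat_degenerate_A_if_row_spans_meet_in_line)
next
  have "(\<Inter>i. pjoin (l i j) (l i (j + 1))) \<inter> (\<Inter>i. pjoin (l i (j + 1)) (l i (j + 2))) = {0}" for j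
    using assms(3) unfolding generic_net_def by blast
  then obtain P where "\<And>j. P j \<noteq> 0" "\<And>i j. P j \<in> pjoin (l i j) (l i (j + 1))"
    "\<And>j. P (j + 1) \<notin> span {P j}"
    using concurrency_points_distinct[OF assms(2)] by blast
  moreover have "proj_line ((laplace_B ^^ 2) l i j)" for i j
    using assms(3) unfolding generic_net_def by simp
  ultimately show "laplace_degenerate_B 2 l"
    by (intro laplace_degenerate_B_2_if_concurrent)
qed

end
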